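(* Let $n\geqslant m\geqslant2$ with $n+m$ even. Then $\mathrm{SR}(n,m)-\mathrm{DR}(n,m)=\left\lceil\frac{m}{2}\right\rceil$.
   Context: Let $p,q$ be distinct primes and $n,m$ positive integers. In $C_{p^nq^m}$ let $C_{p^aq^x}$ be the unique subgroup of order $p^aq^x$, and write $(a,x;b,y)$ for the pair of subgroups $(C_{p^aq^x},C_{p^bq^y})$ with $0\leqslant a\leqslant b\leqslant n$, $0\leqslant x\leqslant y\leqslant m$, $(a,x)\neq(b,y)$. Its midpoint is $(a+x+b+y)/2$, and $R_M$ is the set of all such pairs with midpoint $M$. The simple rainbow number $\mathrm{SR}(n,m)$ is $|R_{(n+m)/2}|$ if $n+m$ is odd, and $|R_{(n+m-1)/2}|$ (which equals $|R_{(n+m+1)/2}|$) if $n+m$ is even. For $n,m\geqslant2$ with $n+m$ even, the double rainbow number is $\mathrm{DR}(n,m)=|R_{(n+m)/2}|$. *)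

theory Defs
  imports Main
begin

text \<open>A pair of subgroups (C_{p^a q^x}, C_{p^b q^y}) of C_{p^n q^m} is encoded by the
  exponent tuple (a,x,b,y), with 0 \<le> a \<le> b \<le> n, 0 \<le> x \<le> y \<le> m, (a,x) \<noteq> (b,y).
  Since the midpoint (a+x+b+y)/2 may be a half-integer, we index by twice the midpoint.\<close>

definition pairs :: "nat \<Rightarrow> nat \<Rightarrow> (nat \<times> nat \<times> nat \<times> nat) set" where
  "pairs n m = {(a, x, b, y). a \<le> b \<and> b \<le> n \<and> x \<le> y \<and> y \<le> m \<and> (a, x) \<noteq> (b, y)}"

definition R2 :: "nat \<Rightarrow> nat \<Rightarrow> nat \<Rightarrow> (nat \<times> nat \<times> nat \<times> nat) set" where
  "R2 n m T = {(a, x, b, y) \<in> pairs n m. a + x + b + y = T}"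

definition SR :: "nat \<Rightarrow> nat \<Rightarrow> nat" where
  "SR n m = (if odd (n + m) then card (R2 n m (n + m)) else card (R2 n m (n + m - 1)))"

definition DR :: "nat \<Rightarrow> nat \<Rightarrow> nat" where
  "DR n m = card (R2 n m (n + m))"

end

theory Submission
  imports Defs
begin

text \<open>Put \<open>N = n + m\<close>. Every tuple of \<open>R_{(N-1)/2}\<close> is automatically proper (its sum is odd),
  while \<open>R_{N/2}\<close> misses exactly the \<open>m + 1\<close> diagonal tuples \<open>(h-x, x, h-x, x)\<close>, \<open>2h = N\<close>.
  Counting all nested tuples of sum \<open>T\<close> fibrewise over \<open>(x, y)\<close>, the number of \<open>a \<le> b \<le> n\<close>
  with \<open>a + b = s\<close> increases by \<open>[s even]\<close> at \<open>s \<le> n\<close> and by \<open>-[s odd]\<close> above \<open>n\<close>.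
  Summed over \<open>x \<le> y \<le> m\<close>, these increments cancel: \<open>(x, y) \<mapsto> (m-1-y, m-x)\<close> maps the pairs
  with odd \<open>x + y < m\<close> onto the off-diagonal pairs with even \<open>x + y \<ge> m\<close>, which leaves the
  \<open>\<lfloor>m/2\<rfloor> + 1\<close> diagonal pairs \<open>(z, z)\<close> with \<open>m \<le> 2z\<close>.
  Hence \<open>SR - DR = (m + 1) - (\<lfloor>m/2\<rfloor> + 1) = \<lceil>m/2\<rceil>\<close>.\<close>

definition le_pairs :: "nat \<Rightarrow> (nat \<times> nat) set" where
  "le_pairs n = {(a, b). a \<le> b \<and> b \<le> n}"

definition le_pairs_sum :: "nat \<Rightarrow> nat \<Rightarrow> (nat \<times> nat) set" where
  "le_pairs_sum n s = {(a, b). a \<le> b \<and> b \<le> n \<and> a + b = s}"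

definition nested_pairs :: "nat \<Rightarrow> nat \<Rightarrow> nat \<Rightarrow> (nat \<times> nat \<times> nat \<times> nat) set" where
  "nested_pairs n m T = {(a, x, b, y). a \<le> b \<and> b \<le> n \<and> x \<le> y \<and> y \<le> m \<and> a + x + b + y = T}"

definition diagonal_pairs :: "nat \<Rightarrow> nat \<Rightarrow> nat \<Rightarrow> (nat \<times> nat \<times> nat \<times> nat) set" where
  "diagonal_pairs n m T = {(a, x, a, x) | a x. a \<le> n \<and> x \<le> m \<and> 2 * (a + x) = T}"

lemma finite_le_pairs: "finite (le_pairs n)"
  by (rule finite_subset[of _ "{0..n} \<times> {0..n}"]) (auto simp: le_pairs_def)

lemma finite_nested_pairs: "finite (nested_pairs n m T)"
  by (rule finite_subset[of _ "{0..n} \<times> {0..m} \<times> {0..n} \<times> {0..m}"]) (auto simp: nested_pairs_def)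

lemma card_le_pairs_sum: "card (le_pairs_sum n s) = Suc (s div 2) - (s - n)"
proof -
  have "le_pairs_sum n s = (\<lambda>a. (a, s - a)) ` {s - n .. s div 2}"
    by (auto simp: le_pairs_sum_def image_iff)
  moreover have "inj_on (\<lambda>a. (a, s - a)) {s - n .. s div 2}"
    by (auto simp: inj_on_def)
  ultimately show ?thesis
    by (simp add: card_image)
qed

lemma card_le_pairs_sum_step:
  assumes "0 < s" and "s \<le> 2 * n + 1"
  shows "int (card (le_pairs_sum n s)) - int (card (le_pairs_sum n (s - 1)))
    = (if s \<le> n then of_bool (even s) else - of_bool (odd s))"
  using assms unfolding card_le_pairs_sum by (cases "even s") (auto elim!: evenE oddE)

lemma R2_eq_nested_minus_diagonal: "R2 n m T = nested_pairs n m T - diagonal_pairs n m T"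
  by (auto simp: R2_def pairs_def nested_pairs_def diagonal_pairs_def)

lemma diagonal_pairs_subset: "diagonal_pairs n m T \<subseteq> nested_pairs n m T"
  by (auto simp: nested_pairs_def diagonal_pairs_def)

lemma card_R2: "card (R2 n m T) = card (nested_pairs n m T) - card (diagonal_pairs n m T)"
  unfolding R2_eq_nested_minus_diagonal
  by (meson card_Diff_subset diagonal_pairs_subset finite_nested_pairs finite_subset)

lemma diagonal_pairs_odd: "odd T \<Longrightarrow> diagonal_pairs n m T = {}"
  by (auto simp: diagonal_pairs_def)

lemma card_diagonal_pairs_middle:
  assumes "m \<le> n" and "even (n + m)"
  shows "card (diagonal_pairs n m (n + m)) = m + 1"
proof -
  define h where "h = (n + m) div 2"
  have "n + m = 2 * h"
    using assms(2) by (simp add: h_def)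
  then have "diagonal_pairs n m (n + m) = (\<lambda>x. (h - x, x, h - x, x)) ` {0..m}"
    using assms(1) by (auto simp: diagonal_pairs_def image_iff)
  moreover have "inj_on (\<lambda>x. (h - x, x, h - x, x)) {0..m}"
    by (auto simp: inj_on_def)
  ultimately show ?thesis
    by (simp add: card_image)
qed

lemma card_nested_pairs:
  "card (nested_pairs n m T)
    = (\<Sum>(x, y) \<in> le_pairs m. card {(a, b). a \<le> b \<and> b \<le> n \<and> a + b + (x + y) = T})"
proof -
  define fibre where "fibre = (\<lambda>(x, y). {(a, b). a \<le> b \<and> b \<le> n \<and> a + b + (x + y) = T})"
  define flatten :: "(nat \<times> nat) \<times> nat \<times> nat \<Rightarrow> nat \<times> nat \<times> nat \<times> nat"
    where "flatten = (\<lambda>((x, y), (a, b)). (a, x, b, y))"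
  have "nested_pairs n m T = flatten ` (SIGMA p : le_pairs m. fibre p)"
    by (auto simp: nested_pairs_def le_pairs_def fibre_def flatten_def image_iff add_ac)
  moreover have "inj_on flatten (SIGMA p : le_pairs m. fibre p)"
    by (auto simp: inj_on_def flatten_def)
  moreover have "finite (fibre p)" for p
    by (rule finite_subset[of _ "{0..n} \<times> {0..n}"]) (auto simp: fibre_def split: prod.splits)
  ultimately show ?thesis
    using finite_le_pairs by (simp add: card_image card_SigmaI fibre_def prod.case_distrib)
qed

definition step_weight :: "nat \<Rightarrow> nat \<Rightarrow> int" where
  "step_weight m t = (if m \<le> t then of_bool (even t) else - of_bool (odd t))"

lemma card_fibre_middle_step:
  assumes "m \<le> n" and "even (n + m)" and "0 < n" and "t \<le> 2 * m"
  shows "int (card {(a, b). a \<le> b \<and> b \<le> n \<and> a + b + t = n + m})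
    - int (card {(a, b). a \<le> b \<and> b \<le> n \<and> a + b + t = n + m - 1}) = step_weight m t"
proof (cases "t < n + m")
  case True
  have "{(a, b). a \<le> b \<and> b \<le> n \<and> a + b + t = n + m} = le_pairs_sum n (n + m - t)"
    and "{(a, b). a \<le> b \<and> b \<le> n \<and> a + b + t = n + m - 1} = le_pairs_sum n (n + m - t - 1)"
    using True by (auto simp: le_pairs_sum_def)
  moreover have "n + m - t \<le> 2 * n + 1"
    using assms(1) by linarith
  ultimately show ?thesis
    using True assms card_le_pairs_sum_step[of "n + m - t" n] by (auto simp: step_weight_def)
next
  case False
  then have "t = n + m" and "n = m"
    using assms(1,4) by linarith+
  then have "{(a, b). a \<le> b \<and> b \<le> n \<and> a + b + t = n + m} = {(0, 0)}"
    and "{(a, b). a \<le> b \<and> b \<le> n \<and> a + b + t = n + m - 1} = {}"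
    using assms(3) by auto
  with \<open>t = n + m\<close> \<open>n = m\<close> show ?thesis
    by (simp only:) (simp add: step_weight_def)
qed

definition even_upper_pairs :: "nat \<Rightarrow> (nat \<times> nat) set" where
  "even_upper_pairs m = {(x, y) \<in> le_pairs m. m \<le> x + y \<and> even (x + y)}"

definition odd_lower_pairs :: "nat \<Rightarrow> (nat \<times> nat) set" where
  "odd_lower_pairs m = {(x, y) \<in> le_pairs m. x + y < m \<and> odd (x + y)}"

lemma even_upper_pairs_eq:
  "even_upper_pairs m
    = (\<lambda>(x, y). (m - 1 - y, m - x)) ` odd_lower_pairs m \<union> (\<lambda>z. (z, z)) ` {(m + 1) div 2 .. m}"
proof (intro set_eqI iffI)
  fix p assume "p \<in> even_upper_pairs m"
  then obtain x y where p: "p = (x, y)" "x \<le> y" "y \<le> m" "m \<le> x + y" "even (x + y)"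
    by (auto simp: even_upper_pairs_def le_pairs_def)
  show "p \<in> (\<lambda>(x, y). (m - 1 - y, m - x)) ` odd_lower_pairs m \<union> (\<lambda>z. (z, z)) ` {(m + 1) div 2 .. m}"
  proof (cases "x = y")
    case True
    then show ?thesis
      using p by (auto simp: image_iff)
  next
    case False
    then have "(m - y, m - 1 - x) \<in> odd_lower_pairs m" and "p = (m - 1 - (m - 1 - x), m - (m - y))"
      using p by (auto simp: odd_lower_pairs_def le_pairs_def)
    then show ?thesis
      by (intro UnI1 rev_image_eqI[where x = "(m - y, m - 1 - x)"]) simp_all
  qed
qed (auto simp: even_upper_pairs_def odd_lower_pairs_def le_pairs_def)

lemma card_even_upper_pairs:
  "card (even_upper_pairs m) = card (odd_lower_pairs m) + (m div 2 + 1)"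
proof -
  have "finite (odd_lower_pairs m)"
    by (rule finite_subset[OF _ finite_le_pairs]) (auto simp: odd_lower_pairs_def)
  moreover have "inj_on (\<lambda>(x, y). (m - 1 - y, m - x)) (odd_lower_pairs m)"
    by (auto simp: inj_on_def odd_lower_pairs_def le_pairs_def)
  moreover have "(\<lambda>(x, y). (m - 1 - y, m - x)) ` odd_lower_pairs m \<inter> (\<lambda>z. (z, z)) ` {(m + 1) div 2 .. m} = {}"
    by (auto simp: odd_lower_pairs_def le_pairs_def)
  ultimately show ?thesis
    unfolding even_upper_pairs_eq by (simp add: card_Un_disjoint card_image inj_on_def)
qed

lemma sum_step_weight: "(\<Sum>(x, y) \<in> le_pairs m. step_weight m (x + y)) = int (m div 2 + 1)"
proof -
  let ?w = "\<lambda>(x, y). step_weight m (x + y)"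
  have subset: "even_upper_pairs m \<union> odd_lower_pairs m \<subseteq> le_pairs m"
    by (auto simp: even_upper_pairs_def odd_lower_pairs_def)
  then have "finite (even_upper_pairs m)" and "finite (odd_lower_pairs m)"
    using finite_le_pairs by (auto intro: finite_subset)
  have "sum ?w (le_pairs m) = sum ?w (even_upper_pairs m \<union> odd_lower_pairs m)"
    by (rule sum.mono_neutral_right[OF finite_le_pairs subset])
      (auto simp: even_upper_pairs_def odd_lower_pairs_def step_weight_def)
  also have "\<dots> = sum ?w (even_upper_pairs m) + sum ?w (odd_lower_pairs m)"
    by (rule sum.union_disjoint) (use \<open>finite (even_upper_pairs m)\<close> \<open>finite (odd_lower_pairs m)\<close>
      in \<open>auto simp: even_upper_pairs_def odd_lower_pairs_def\<close>)
  also have "sum ?w (even_upper_pairs m) = (\<Sum>p \<in> even_upper_pairs m. 1)"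
    by (rule sum.cong) (auto simp: even_upper_pairs_def step_weight_def)
  also have "sum ?w (odd_lower_pairs m) = (\<Sum>p \<in> odd_lower_pairs m. - 1)"
    by (rule sum.cong) (auto simp: odd_lower_pairs_def step_weight_def)
  finally show ?thesis
    by (simp add: card_even_upper_pairs)
qed

lemma card_nested_pairs_middle_step:
  assumes "m \<le> n" and "even (n + m)" and "0 < n"
  shows "int (card (nested_pairs n m (n + m))) - int (card (nested_pairs n m (n + m - 1)))
    = int (m div 2 + 1)"
proof -
  have "int (card (nested_pairs n m (n + m))) - int (card (nested_pairs n m (n + m - 1)))
      = (\<Sum>(x, y) \<in> le_pairs m. step_weight m (x + y))"
    unfolding card_nested_pairs of_nat_sum sum_subtractf[symmetric]
    by (intro sum.cong refl) (use assms card_fibre_middle_step[of m n] in \<open>auto simp: le_pairs_def\<close>)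
  then show ?thesis
    by (simp add: sum_step_weight)
qed

theorem lemma7p11:
  fixes n m :: nat
  assumes "m \<ge> 2" and "n \<ge> m" and "even (n + m)"
  shows "int (SR n m) - int (DR n m) = int ((m + 1) div 2)"
proof -
  have "SR n m = card (nested_pairs n m (n + m - 1))"
    using assms by (simp add: SR_def card_R2 diagonal_pairs_odd)
  moreover have "card (diagonal_pairs n m (n + m)) \<le> card (nested_pairs n m (n + m))"
    by (rule card_mono[OF finite_nested_pairs diagonal_pairs_subset])
  then have "DR n m + (m + 1) = card (nested_pairs n m (n + m))"
    using assms by (simp add: DR_def card_R2 card_diagonal_pairs_middle)
  moreover have "int (card (nested_pairs n m (n + m))) - int (card (nested_pairs n m (n + m - 1)))
      = int (m div 2 + 1)"
    using assms by (intro card_nested_pairs_middle_step) auto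
  ultimately show ?thesis
    by linarith
qed

end
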